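(* Consider the ARLOD model on a finite connected graph $G$ with $N\ge 2$ agents, learning rate $\alpha\in(0,1)$, exploration rate $\epsilon\in(0,1)$, and any initial Q-values in $[-1,1]$. Then $$\mathbb{P}\big(\exists\, t_1<\infty \text{ and } o\in\{-1,1\} : Q^i_o(t_1)>Q^i_{-o}(t_1)\ \ \forall i\in\{1,\dots,N\}\big)>0.$$
   Context: The ARLOD (asymmetric reinforcement learning for opinion dynamics) model: $G=(V,E)$ is a finite simple undirected graph on vertex set $V=\{1,\dots,N\}$ (agents); $N(i)=\{u:(u,i)\in E\}$ is the neighbourhood of $i$. Each agent $i$ holds two Q-values $Q^i_{1}(t),Q^i_{-1}(t)\in\mathbb{R}$, initialized in $[-1,1]$. The favoured opinion of agent $i$ at time $t$ is $1$ if $Q^i_1(t)\ge Q^i_{-1}(t)$ and $-1$ otherwise. In each discrete round $t$: an agent $i$ is chosen uniformly at random from $V$; $i$ chooses a neighbour $j\in N(i)$ uniformly at random; $i$ expresses an opinion $o_i(t)$, equal to its favoured opinion with probability $1-\epsilon$ and to the other opinion with probability $\epsilon$; $j$ responds with $R_j=1$ if $o_i(t)$ equals $j$'s favoured opinion and $R_j=-1$ otherwise; then only agent $i$ updates, via $Q^i_{o_i(t)}(t+1)=(1-\alpha)Q^i_{o_i(t)}(t)+\alpha R_j$ and $Q^i_{-o_i(t)}(t+1)=Q^i_{-o_i(t)}(t)$. All other agents' Q-values are unchanged in that round. *)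

theory Defs
  imports "HOL-Probability.Probability"
begin

definition simple_graph :: "nat \<Rightarrow> (nat \<times> nat) set \<Rightarrow> bool" where
  "simple_graph N E \<longleftrightarrow> E \<subseteq> {1..N} \<times> {1..N} \<and> sym E \<and> irrefl E"

definition connected_graph :: "nat \<Rightarrow> (nat \<times> nat) set \<Rightarrow> bool" where
  "connected_graph N E \<longleftrightarrow> (\<forall>u\<in>{1..N}. \<forall>v\<in>{1..N}. (u, v) \<in> E\<^sup>*)"

definition nbhd :: "(nat \<times> nat) set \<Rightarrow> nat \<Rightarrow> nat set" where
  "nbhd E i = {u. (u, i) \<in> E}"

text \<open>Q-values: Q i o for agent i and opinion o \<in> {-1,1}.\<close>
type_synonym qstate = "nat \<Rightarrow> int \<Rightarrow> real"

definition favoured :: "qstate \<Rightarrow> nat \<Rightarrow> int" where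
  "favoured Q i = (if Q i 1 \<ge> Q i (-1) then 1 else -1)"

text \<open>Randomness of one round: (speaker i, listener j) and an exploration flag
  (True = express the non-favoured opinion). It is state-independent.\<close>
definition round_pmf :: "nat \<Rightarrow> (nat \<times> nat) set \<Rightarrow> real \<Rightarrow> ((nat \<times> nat) \<times> bool) pmf" where
  "round_pmf N E \<epsilon> =
     pair_pmf (bind_pmf (pmf_of_set {1..N}) (\<lambda>i. map_pmf (\<lambda>j. (i, j)) (pmf_of_set (nbhd E i))))
              (bernoulli_pmf \<epsilon>)"

definition arlod_update :: "real \<Rightarrow> ((nat \<times> nat) \<times> bool) \<Rightarrow> qstate \<Rightarrow> qstate" where
  "arlod_update \<alpha> r Q =
     (let i = fst (fst r); j = snd (fst r); ex = snd r;
          o' = (if ex then - favoured Q i else favoured Q i);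
          R = (if o' = favoured Q j then (1::real) else -1)
      in Q(i := (Q i)(o' := (1 - \<alpha>) * Q i o' + \<alpha> * R)))"

primrec arlod_traj :: "real \<Rightarrow> qstate \<Rightarrow> (nat \<Rightarrow> (nat \<times> nat) \<times> bool) \<Rightarrow> nat \<Rightarrow> qstate" where
  "arlod_traj \<alpha> Q0 \<omega> 0 = Q0"
| "arlod_traj \<alpha> Q0 \<omega> (Suc t) = arlod_update \<alpha> (\<omega> t) (arlod_traj \<alpha> Q0 \<omega> t)"

definition arlod_space :: "nat \<Rightarrow> (nat \<times> nat) set \<Rightarrow> real \<Rightarrow> (nat \<Rightarrow> (nat \<times> nat) \<times> bool) measure" where
  "arlod_space N E \<epsilon> = PiM UNIV (\<lambda>_::nat. measure_pmf (round_pmf N E \<epsilon>))"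

definition consensus :: "nat \<Rightarrow> qstate \<Rightarrow> bool" where
  "consensus N Q \<longleftrightarrow> (\<exists>op\<in>{-1, 1::int}. \<forall>i\<in>{1..N}. Q i op > Q i (-op))"

end

theory Submission
  imports Defs
begin

text \<open>Some finite sequence of rounds, each of positive probability, drives the model to
  consensus; in the i.i.d. path space the paths beginning with that sequence form an event of
  positive probability. To build the sequence: if agent i repeatedly addresses a neighbour j
  and (exploring or not, as needed) expresses opinion o, then Q i o converges geometrically to
  j's response. Doing this first for j's favoured opinion o and then for -o makes i strictly
  favour o, and no other agent changes. By connectivity, the set of agents strictly favouring o
  can thus be enlarged along an edge leaving it until it contains every agent. The bound on the
  initial Q-values is not needed.\<close>

lemma map_upt_eq_iff: "map \<omega> [0..<t] = xs \<longleftrightarrow> length xs = t \<and> (\<forall>k<t. \<omega> k = xs ! k)"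
  by (auto simp: list_eq_iff_nth_eq)

lemma emeasure_PiM_pmf_prefix:
  fixes p :: "'a pmf"
  defines "M \<equiv> PiM UNIV (\<lambda>_::nat. measure_pmf p)"
  shows "emeasure M {\<omega> \<in> space M. map \<omega> [0..<length xs] = xs} = ennreal (\<Prod>t<length xs. pmf p (xs ! t))"
proof -
  have "{\<omega> \<in> space M. map \<omega> [0..<length xs] = xs}
      = prod_emb UNIV (\<lambda>_. measure_pmf p) {..<length xs} (\<Pi>\<^sub>E t\<in>{..<length xs}. {xs ! t})"
    by (simp add: M_def prod_emb_def space_PiM map_upt_eq_iff vimage_def restrict_PiE_iff Pi_def)
  also have "emeasure M \<dots> = (\<Prod>t<length xs. emeasure (measure_pmf p) {xs ! t})"
    unfolding M_def by (rule emeasure_PiM_emb) (auto simp: prob_space_measure_pmf)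
  also have "\<dots> = ennreal (\<Prod>t<length xs. pmf p (xs ! t))"
    by (simp add: emeasure_pmf_single prod_ennreal)
  finally show ?thesis .
qed

lemma sets_PiM_pmf_prefix_event:
  fixes p :: "'a::countable pmf"
  defines "M \<equiv> PiM UNIV (\<lambda>_::nat. measure_pmf p)"
  shows "{\<omega> \<in> space M. \<exists>t. P (map \<omega> [0..<t])} \<in> sets M"
proof -
  have component: "{\<omega> \<in> space M. \<omega> k = x} \<in> sets M" for k x
  proof -
    have "(\<lambda>\<omega>. \<omega> k) \<in> M \<rightarrow>\<^sub>M measure_pmf p"
      unfolding M_def by (rule measurable_component_singleton) simp
    from measurable_sets[OF this, of "{x}"] show ?thesis
      by (simp add: vimage_def Int_def conj_commute)
  qed
  have "{\<omega> \<in> space M. \<exists>t. P (map \<omega> [0..<t])}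
      = {\<omega> \<in> space M. \<exists>t. \<exists>xs\<in>{xs. P xs \<and> length xs = t}. \<forall>k. k < t \<longrightarrow> \<omega> k = xs ! k}"
    by (auto simp: map_upt_eq_iff[symmetric])
  also have "\<dots> \<in> sets M"
    by (intro sets.sets_Collect_countable_Ex sets.sets_Collect_countable_Bex
        sets.sets_Collect_countable_All sets.sets_Collect_imp sets.sets_Collect_const component)
  finally show ?thesis .
qed

lemma measure_PiM_pmf_prefix_event_pos:
  fixes p :: "'a::countable pmf"
  defines "M \<equiv> PiM UNIV (\<lambda>_::nat. measure_pmf p)"
  assumes "P xs" and "set xs \<subseteq> set_pmf p"
  shows "measure M {\<omega> \<in> space M. \<exists>t. P (map \<omega> [0..<t])} > 0"
proof -
  interpret prob_space M
    unfolding M_def by (intro prob_space_PiM prob_space_measure_pmf)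
  have "0 < ennreal (\<Prod>t<length xs. pmf p (xs ! t))"
    using assms(3) by (auto intro!: prod_pos simp: set_pmf_iff subset_iff pmf_positive nth_mem)
  also have "\<dots> = emeasure M {\<omega> \<in> space M. map \<omega> [0..<length xs] = xs}"
    unfolding M_def by (rule emeasure_PiM_pmf_prefix[symmetric])
  also have "\<dots> \<le> emeasure M {\<omega> \<in> space M. \<exists>t. P (map \<omega> [0..<t])}"
    using assms(2) unfolding M_def
    by (intro emeasure_mono sets_PiM_pmf_prefix_event) (auto intro!: exI[of _ "length xs"])
  finally show ?thesis
    by (simp add: emeasure_eq_measure)
qed

type_synonym arlod_round = "(nat \<times> nat) \<times> bool"

definition arlod_run :: "real \<Rightarrow> qstate \<Rightarrow> arlod_round list \<Rightarrow> qstate" where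
  "arlod_run \<alpha> Q rs = foldl (\<lambda>Q r. arlod_update \<alpha> r Q) Q rs"

lemma arlod_traj_eq_run: "arlod_traj \<alpha> Q0 \<omega> t = arlod_run \<alpha> Q0 (map \<omega> [0..<t])"
  by (induction t) (simp_all add: arlod_run_def)

definition arlod_reachable :: "nat \<Rightarrow> (nat \<times> nat) set \<Rightarrow> real \<Rightarrow> real \<Rightarrow> qstate \<Rightarrow> qstate \<Rightarrow> bool" where
  "arlod_reachable N E \<epsilon> \<alpha> Q Q' \<longleftrightarrow>
     (\<exists>rs. set rs \<subseteq> set_pmf (round_pmf N E \<epsilon>) \<and> arlod_run \<alpha> Q rs = Q')"

lemma arlod_reachable_refl: "arlod_reachable N E \<epsilon> \<alpha> Q Q"
  unfolding arlod_reachable_def by (intro exI[of _ "[]"]) (simp add: arlod_run_def)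

lemma arlod_reachable_trans:
  assumes "arlod_reachable N E \<epsilon> \<alpha> Q Q'" "arlod_reachable N E \<epsilon> \<alpha> Q' Q''"
  shows "arlod_reachable N E \<epsilon> \<alpha> Q Q''"
proof -
  obtain rs1 rs2 where "set rs1 \<subseteq> set_pmf (round_pmf N E \<epsilon>)" "arlod_run \<alpha> Q rs1 = Q'"
    and "set rs2 \<subseteq> set_pmf (round_pmf N E \<epsilon>)" "arlod_run \<alpha> Q' rs2 = Q''"
    using assms unfolding arlod_reachable_def by blast
  then show ?thesis
    unfolding arlod_reachable_def by (intro exI[of _ "rs1 @ rs2"]) (simp add: arlod_run_def)
qed

lemma arlod_reachable_step:
  assumes "r \<in> set_pmf (round_pmf N E \<epsilon>)" "arlod_reachable N E \<epsilon> \<alpha> (arlod_update \<alpha> r Q) Q'"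
  shows "arlod_reachable N E \<epsilon> \<alpha> Q Q'"
proof -
  obtain rs where "set rs \<subseteq> set_pmf (round_pmf N E \<epsilon>)" "arlod_run \<alpha> (arlod_update \<alpha> r Q) rs = Q'"
    using assms(2) unfolding arlod_reachable_def by blast
  then show ?thesis
    using assms(1) unfolding arlod_reachable_def by (intro exI[of _ "r # rs"]) (simp add: arlod_run_def)
qed

lemma edge_round_in_set_round_pmf:
  assumes "simple_graph N E" "0 < \<epsilon>" "\<epsilon> < 1" "(j, i) \<in> E"
  shows "((i, j), b) \<in> set_pmf (round_pmf N E \<epsilon>)"
proof -
  have "i \<in> {1..N}" and nbhd_sub: "nbhd E i \<subseteq> {1..N}"
    using assms(1,4) by (auto simp: simple_graph_def nbhd_def)
  moreover have "j \<in> nbhd E i"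
    using assms(4) by (simp add: nbhd_def)
  moreover have "finite (nbhd E i)"
    using nbhd_sub finite_subset by blast
  ultimately have "(i, j) \<in> set_pmf (map_pmf (Pair i) (pmf_of_set (nbhd E i)))"
    by (subst set_map_pmf, subst set_pmf_of_set) auto
  then show ?thesis
    using assms(2,3) \<open>i \<in> {1..N}\<close> unfolding round_pmf_def by auto
qed

lemma favoured_range: "favoured Q i \<in> {-1, 1}"
  by (simp add: favoured_def)

lemma favoured_eqI: "op \<in> {-1, 1} \<Longrightarrow> Q i op > Q i (-op) \<Longrightarrow> favoured Q i = op"
  by (auto simp: favoured_def)

lemma arlod_update_express:
  assumes "p \<in> {-1, 1}" "i \<noteq> j"
  shows "arlod_update \<alpha> ((i, j), favoured Q i \<noteq> p) Q =
     Q(i := (Q i)(p := (1 - \<alpha>) * Q i p + \<alpha> * (if p = favoured Q j then 1 else -1)))"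
proof -
  have "(if favoured Q i \<noteq> p then - favoured Q i else favoured Q i) = p"
    using assms(1) favoured_range[of Q i] by auto
  then show ?thesis
    by (simp add: arlod_update_def Let_def)
qed

lemma arlod_reachable_express_repeatedly:
  assumes "simple_graph N E" "0 < \<epsilon>" "\<epsilon> < 1" "(j, i) \<in> E" "p \<in> {-1, 1}"
    and "s = (if p = favoured Q j then 1 else -1)"
  shows "arlod_reachable N E \<epsilon> \<alpha> Q (Q(i := (Q i)(p := s - (1 - \<alpha>) ^ n * (s - Q i p))))"
  using assms(6)
proof (induction n arbitrary: Q)
  case 0
  then show ?case by (simp add: arlod_reachable_refl)
next
  case (Suc n)
  have "i \<noteq> j"
    using assms(1,4) by (auto simp: simple_graph_def irrefl_def)
  define Q1 where "Q1 = Q(i := (Q i)(p := (1 - \<alpha>) * Q i p + \<alpha> * s))"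
  have update: "arlod_update \<alpha> ((i, j), favoured Q i \<noteq> p) Q = Q1"
    unfolding Q1_def Suc.prems using arlod_update_express[OF assms(5) \<open>i \<noteq> j\<close>] by simp
  have "favoured Q1 j = favoured Q j"
    using \<open>i \<noteq> j\<close> by (simp add: Q1_def favoured_def)
  then have "s = (if p = favoured Q1 j then 1 else -1)"
    using Suc.prems by simp
  then have "arlod_reachable N E \<epsilon> \<alpha> Q1 (Q1(i := (Q1 i)(p := s - (1 - \<alpha>) ^ n * (s - Q1 i p))))"
    by (rule Suc.IH)
  also have "Q1(i := (Q1 i)(p := s - (1 - \<alpha>) ^ n * (s - Q1 i p)))
      = Q(i := (Q i)(p := s - (1 - \<alpha>) ^ Suc n * (s - Q i p)))"
    by (simp add: Q1_def algebra_simps)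
  finally show ?case
    using arlod_reachable_step[OF edge_round_in_set_round_pmf[OF assms(1-4)]] update by metis
qed

lemma arlod_reachable_adopt:
  assumes "simple_graph N E" "0 < \<epsilon>" "\<epsilon> < 1" "(j, i) \<in> E" "0 < \<alpha>" "\<alpha> < 1"
    and "op \<in> {-1, 1}" "favoured Q j = op"
  shows "\<exists>a b. a > b \<and> arlod_reachable N E \<epsilon> \<alpha> Q (Q(i := (Q i)(op := a, -op := b)))"
proof -
  have "i \<noteq> j"
    using assms(1,4) by (auto simp: simple_graph_def irrefl_def)
  have "op \<noteq> -op" "-op \<in> {-1, 1}"
    using assms(7) by auto
  \<comment> \<open>The gap a - b reached below is 2 - (1 - \<alpha>) ^ n * (2 - Q i op + Q i (-op)).\<close>
  have "(\<lambda>n. (1 - \<alpha>) ^ n * (2 - Q i op + Q i (-op))) \<longlonglongrightarrow> 0"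
    using assms(5,6) by (intro tendsto_mult_left_zero LIMSEQ_power_zero) simp
  then have "\<forall>\<^sub>F n in sequentially. (1 - \<alpha>) ^ n * (2 - Q i op + Q i (-op)) < 2"
    by (rule order_tendstoD) simp
  then obtain n where n: "(1 - \<alpha>) ^ n * (2 - Q i op + Q i (-op)) < 2"
    by (auto simp: eventually_sequentially)
  define c where "c = (1 - \<alpha>) ^ n"
  define a where "a = 1 - c * (1 - Q i op)"
  define b where "b = -1 + c * (1 + Q i (-op))"
  define Q1 where "Q1 = Q(i := (Q i)(op := a))"
  have "arlod_reachable N E \<epsilon> \<alpha> Q Q1"
    unfolding Q1_def a_def c_def
    using arlod_reachable_express_repeatedly[OF assms(1-4,7), where Q = Q and s = 1 and n = n] assms(8)
    by simp
  moreover have "favoured Q1 j = op"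
    using \<open>i \<noteq> j\<close> assms(8) by (simp add: Q1_def favoured_def)
  then have "arlod_reachable N E \<epsilon> \<alpha> Q1 (Q1(i := (Q1 i)(-op := -1 - c * (-1 - Q1 i (-op)))))"
    unfolding c_def
    using arlod_reachable_express_repeatedly[OF assms(1-4) \<open>-op \<in> {-1, 1}\<close>,
        where Q = Q1 and s = "-1" and n = n] \<open>op \<noteq> -op\<close>
    by simp
  ultimately have "arlod_reachable N E \<epsilon> \<alpha> Q (Q1(i := (Q1 i)(-op := -1 - c * (-1 - Q1 i (-op)))))"
    by (rule arlod_reachable_trans)
  also have "Q1(i := (Q1 i)(-op := -1 - c * (-1 - Q1 i (-op)))) = Q(i := (Q i)(op := a, -op := b))"
    using \<open>op \<noteq> -op\<close> by (simp add: Q1_def a_def b_def algebra_simps)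
  finally have "arlod_reachable N E \<epsilon> \<alpha> Q (Q(i := (Q i)(op := a, -op := b)))" .
  moreover have "a > b"
    using n by (simp add: a_def b_def c_def algebra_simps)
  ultimately show ?thesis by blast
qed

definition strict_supporters :: "nat \<Rightarrow> qstate \<Rightarrow> int \<Rightarrow> nat set" where
  "strict_supporters N Q op = {i \<in> {1..N}. Q i op > Q i (-op)}"

lemma consensus_if_strict_supporters_all:
  assumes "op \<in> {-1, 1}" "strict_supporters N Q op = {1..N}"
  shows "consensus N Q"
proof -
  have "\<forall>i\<in>{1..N}. Q i op > Q i (-op)"
    using assms(2) unfolding strict_supporters_def by blast
  then show ?thesis
    using assms(1) unfolding consensus_def by blast
qed

lemma connected_graphD: "connected_graph N E \<Longrightarrow> u \<in> {1..N} \<Longrightarrow> v \<in> {1..N} \<Longrightarrow> (u, v) \<in> E\<^sup>*"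
  by (simp add: connected_graph_def)

lemma rtrancl_leaves_set:
  assumes "(u, v) \<in> R\<^sup>*" "u \<in> S" "v \<notin> S"
  shows "\<exists>x y. (x, y) \<in> R \<and> x \<in> S \<and> y \<notin> S"
  using assms
proof (induction rule: rtrancl_induct)
  case (step y z)
  then show ?case
    by (cases "y \<in> S") blast+
qed simp

lemma strict_supporters_subset: "strict_supporters N Q op \<subseteq> {1..N}"
  by (auto simp: strict_supporters_def)

lemma arlod_reachable_grow_supporters:
  assumes "simple_graph N E" "connected_graph N E" "0 < \<epsilon>" "\<epsilon> < 1" "0 < \<alpha>" "\<alpha> < 1"
    and "op \<in> {-1, 1}" "strict_supporters N Q op \<noteq> {}" "strict_supporters N Q op \<noteq> {1..N}"
  shows "\<exists>Q'. arlod_reachable N E \<epsilon> \<alpha> Q Q' \<and> strict_supporters N Q op \<subset> strict_supporters N Q' op"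
proof -
  define S where "S = strict_supporters N Q op"
  obtain u where "u \<in> S"
    using assms(8) unfolding S_def by blast
  obtain v where "v \<in> {1..N} - S"
    using assms(9) strict_supporters_subset unfolding S_def by blast
  have "(u, v) \<in> E\<^sup>*"
    using connected_graphD[OF assms(2)] \<open>u \<in> S\<close> \<open>v \<in> {1..N} - S\<close> strict_supporters_subset
    unfolding S_def by blast
  then obtain x y where xy: "(x, y) \<in> E" "x \<in> S" "y \<notin> S"
    using rtrancl_leaves_set \<open>u \<in> S\<close> \<open>v \<in> {1..N} - S\<close> by (metis DiffD2)
  have "y \<in> {1..N}"
    using assms(1) xy(1) by (auto simp: simple_graph_def)
  have "favoured Q x = op"
    using xy(2) assms(7) by (intro favoured_eqI) (auto simp: S_def strict_supporters_def)
  then obtain a b where "a > b"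
    and reach: "arlod_reachable N E \<epsilon> \<alpha> Q (Q(y := (Q y)(op := a, -op := b)))"
    using arlod_reachable_adopt[OF assms(1,3,4) xy(1) assms(5-7)] by blast
  have "op \<noteq> -op"
    using assms(7) by auto
  then have "strict_supporters N (Q(y := (Q y)(op := a, -op := b))) op = insert y S"
    using \<open>a > b\<close> \<open>y \<in> {1..N}\<close> by (auto simp: S_def strict_supporters_def)
  then show ?thesis
    using reach xy(3) unfolding S_def by blast
qed

lemma arlod_reachable_all_supporters:
  assumes "simple_graph N E" "connected_graph N E" "0 < \<epsilon>" "\<epsilon> < 1" "0 < \<alpha>" "\<alpha> < 1"
    and "op \<in> {-1, 1}" "strict_supporters N Q op \<noteq> {}"
  shows "\<exists>Q'. arlod_reachable N E \<epsilon> \<alpha> Q Q' \<and> strict_supporters N Q' op = {1..N}"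
  using assms(8)
proof (induction "card ({1..N} - strict_supporters N Q op)" arbitrary: Q rule: less_induct)
  case less
  show ?case
  proof (cases "strict_supporters N Q op = {1..N}")
    case True
    then show ?thesis
      using arlod_reachable_refl by blast
  next
    case False
    then obtain Q1 where reach: "arlod_reachable N E \<epsilon> \<alpha> Q Q1"
      and grow: "strict_supporters N Q op \<subset> strict_supporters N Q1 op"
      using arlod_reachable_grow_supporters[OF assms(1-7) less.prems] by blast
    have "{1..N} - strict_supporters N Q1 op \<subset> {1..N} - strict_supporters N Q op"
      using grow strict_supporters_subset[of N Q1 op] by blast
    then have "card ({1..N} - strict_supporters N Q1 op) < card ({1..N} - strict_supporters N Q op)"
      by (intro psubset_card_mono) simp_all
    moreover have "strict_supporters N Q1 op \<noteq> {}"
      using grow by blast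
    ultimately obtain Q' where "arlod_reachable N E \<epsilon> \<alpha> Q1 Q'" "strict_supporters N Q' op = {1..N}"
      using less.hyps by blast
    then show ?thesis
      using arlod_reachable_trans[OF reach] by blast
  qed
qed

lemma arlod_reachable_consensus:
  assumes "N \<ge> 2" "simple_graph N E" "connected_graph N E" "0 < \<epsilon>" "\<epsilon> < 1" "0 < \<alpha>" "\<alpha> < 1"
  shows "\<exists>Q'. arlod_reachable N E \<epsilon> \<alpha> Q Q' \<and> consensus N Q'"
proof -
  have "(1, 2) \<in> E\<^sup>*"
    using assms(1) by (intro connected_graphD[OF assms(3)]) auto
  then have "\<exists>j i. (j, i) \<in> E \<and> j \<in> {1} \<and> i \<notin> {1::nat}"
    by (rule rtrancl_leaves_set) simp_all
  then obtain j i where edge: "(j, i) \<in> E"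
    by blast
  define op where "op = favoured Q j"
  have op: "op \<in> {-1, 1}"
    using favoured_range op_def by simp
  obtain a b where "a > b" and reach: "arlod_reachable N E \<epsilon> \<alpha> Q (Q(i := (Q i)(op := a, -op := b)))"
    using arlod_reachable_adopt[OF assms(2,4,5) edge assms(6,7) op] op_def by blast
  define Q1 where "Q1 = Q(i := (Q i)(op := a, -op := b))"
  have "i \<in> {1..N}"
    using assms(2) edge by (auto simp: simple_graph_def)
  then have "strict_supporters N Q1 op \<noteq> {}"
    using op \<open>a > b\<close> by (auto simp: Q1_def strict_supporters_def)
  then obtain Q' where "arlod_reachable N E \<epsilon> \<alpha> Q1 Q'" "strict_supporters N Q' op = {1..N}"
    using arlod_reachable_all_supporters[OF assms(2-7) op] by blast
  then show ?thesis
    using arlod_reachable_trans[OF reach[folded Q1_def]] consensus_if_strict_supporters_all[OF op]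
    by blast
qed

theorem lemma2:
  fixes N :: nat and E :: "(nat \<times> nat) set" and \<alpha> \<epsilon> :: real and Q0 :: qstate
  assumes "N \<ge> 2"
    and "simple_graph N E" and "connected_graph N E"
    and "0 < \<alpha>" and "\<alpha> < 1" and "0 < \<epsilon>" and "\<epsilon> < 1"
    and "\<forall>i\<in>{1..N}. \<forall>op\<in>{-1, 1::int}. Q0 i op \<in> {-1..1}"
  shows "measure (arlod_space N E \<epsilon>)
           {\<omega> \<in> space (arlod_space N E \<epsilon>). \<exists>t1. consensus N (arlod_traj \<alpha> Q0 \<omega> t1)} > 0"
proof -
  obtain Q' where "arlod_reachable N E \<epsilon> \<alpha> Q0 Q'" "consensus N Q'"
    using arlod_reachable_consensus[OF assms(1-3,6,7,4,5)] by blast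
  then obtain rs where "consensus N (arlod_run \<alpha> Q0 rs)" "set rs \<subseteq> set_pmf (round_pmf N E \<epsilon>)"
    by (auto simp: arlod_reachable_def)
  from measure_PiM_pmf_prefix_event_pos[where P = "\<lambda>xs. consensus N (arlod_run \<alpha> Q0 xs)", OF this]
  show ?thesis
    by (simp add: arlod_space_def arlod_traj_eq_run)
qed

end
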